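(* Let $p$ be a prime, $q=p^r$, $\mathscr{C}\subseteq\mathbb{F}_q^n$ a linear code over $\mathbb{F}_q$ of dimension $k$ ($1\le k<n$), $\mathscr{D}\subseteq\mathbb{F}_{q^k}^m$ a linear code over $\mathbb{F}_{q^k}$ of dimension $s$ ($1\le s<m$) such that for each $1\le i\le m$ some codeword has $i$-th coordinate $1$, $\kappa:\mathbb{F}_{q^k}\to\mathcal{L}(\mathscr{C},\mathbb{F}_p)$ an $\mathbb{F}_p$-linear isomorphism, $f_\lambda=\kappa(\lambda)$, and $Q=\operatorname{span}\{\Phi_\Lambda:\Lambda\in\mathscr{D}\}$ the stabilizer code described in the context, with minimum distance $\delta$. If $d(\mathscr{C})\le d(\mathscr{D})$, then $\delta=d(\mathscr{C})$.
   Context: $\zeta=e^{2\pi i/p}$; $\operatorname{tr}:\mathbb{F}_q\to\mathbb{F}_p$ the trace. $\mathcal{L}(\mathscr{C},\mathbb{F}_p)$ is the space of $\mathbb{F}_p$-linear maps $\mathscr{C}\to\mathbb{F}_p$. $\phi_\lambda=q^{-k/2}\sum_{\mathbf{c}\in\mathscr{C}}\zeta^{f_\lambda(\mathbf{c})}|\mathbf{c}\rangle$, $\Phi_\Lambda=\phi_{\lambda_1}\otimes\cdots\otimes\phi_{\lambda_m}$ in $(\mathbb{C}^q)^{\otimes nm}$ (orthonormal basis $|\mathbf{x}\rangle$, $\mathbf{x}\in\mathbb{F}_q^{nm}$). $d(\mathscr{C})$, $d(\mathscr{D})$ are minimum Hamming distances. Errors: $X(a)|x\rangle=|x+a\rangle$,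 $Z(b)|x\rangle=\zeta^{\operatorname{tr}(bx)}|x\rangle$, tensored to $X(\mathbf{a}),Z(\mathbf{b})$; error group $\mathcal{P}_{nm}=\{\omega^cX(\mathbf{a})Z(\mathbf{b})\}$ with $\omega=\zeta,c\in\mathbb{F}_p$ ($p$ odd) or $\omega=i,c\in\{0,1,2,3\}$ ($p=2$); weight of $\omega^cX(\mathbf{a})Z(\mathbf{b})$ is $\#\{j:(a_j,b_j)\ne(0,0)\}$. With $\mathcal{S}=\{E\in\mathcal{P}_{nm}:Ev=v\ \forall v\in Q\}$, $Q$ is a stabilizer code (i.e. $Q$ is the common fixed space of $\mathcal{S}$), and its minimum distance is $\delta=\min\{\operatorname{wt}(E):E\in C_{\mathcal{P}_{nm}}(\mathcal{S})\setminus\mathcal{S}\mathcal{Z}(\mathcal{P}_{nm})\}$, where $\mathcal{Z}(\mathcal{P}_{nm})$ is the set of scalar elements. *)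

theory Defs
  imports "HOL-Analysis.Analysis" "HOL-Library.Function_Algebras"
begin

definition vecs :: "nat \<Rightarrow> (nat \<Rightarrow> 'a::zero) set" where
  "vecs n = {v. \<forall>i. n \<le> i \<longrightarrow> v i = 0}"

definition fscale :: "'a::times \<Rightarrow> (nat \<Rightarrow> 'a) \<Rightarrow> (nat \<Rightarrow> 'a)" where
  "fscale c v = (\<lambda>i. c * v i)"

definition linear_code :: "nat \<Rightarrow> nat \<Rightarrow> (nat \<Rightarrow> 'a::field) set \<Rightarrow> bool" where
  "linear_code n k C \<longleftrightarrow> C \<subseteq> vecs n \<and> module.subspace fscale C
      \<and> vector_space.dim fscale C = k"

definition hdist :: "nat \<Rightarrow> (nat \<Rightarrow> 'a) \<Rightarrow> (nat \<Rightarrow> 'a) \<Rightarrow> nat" where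
  "hdist n x y = card {i. i < n \<and> x i \<noteq> y i}"

definition min_dist :: "nat \<Rightarrow> (nat \<Rightarrow> 'a) set \<Rightarrow> nat" where
  "min_dist n C = Min {hdist n x y | x y. x \<in> C \<and> y \<in> C \<and> x \<noteq> y}"

definition Fp :: "nat \<Rightarrow> 'a::field set" where
  "Fp p = {of_nat j | j. j < p}"

definition fp_nat :: "nat \<Rightarrow> 'a::field \<Rightarrow> nat" where
  "fp_nat p t = (THE j. j < p \<and> of_nat j = t)"

definition zeta_pow :: "nat \<Rightarrow> 'a::field \<Rightarrow> complex" where
  "zeta_pow p t = cis (2 * pi * real (fp_nat p t) / real p)"

definition tr :: "nat \<Rightarrow> nat \<Rightarrow> 'a::field \<Rightarrow> 'a" where
  "tr p r x = (\<Sum>i<r. x ^ (p ^ i))"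

text \<open>L(C, F_p): F_p-linear maps C -> F_p (taken extensionally 0 outside C).\<close>
definition lin_fun :: "nat \<Rightarrow> (nat \<Rightarrow> 'a::field) set \<Rightarrow> ((nat \<Rightarrow> 'a) \<Rightarrow> 'a) set" where
  "lin_fun p C = {f. (\<forall>c\<in>C. f c \<in> Fp p)
      \<and> (\<forall>c\<in>C. \<forall>c'\<in>C. f (c + c') = f c + f c')
      \<and> (\<forall>a\<in>Fp p. \<forall>c\<in>C. f (fscale a c) = a * f c)
      \<and> (\<forall>c. c \<notin> C \<longrightarrow> f c = 0)}"

definition phi :: "nat \<Rightarrow> nat \<Rightarrow> (nat \<Rightarrow> 'a::{field,finite}) set
    \<Rightarrow> ('b \<Rightarrow> (nat \<Rightarrow> 'a) \<Rightarrow> 'a) \<Rightarrow> 'b \<Rightarrow> (nat \<Rightarrow> 'a) \<Rightarrow> complex" where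
  "phi p k C \<kappa> l = (\<lambda>c. if c \<in> C then
      complex_of_real (real CARD('a) powr (- real k / 2)) * zeta_pow p (\<kappa> l c) else 0)"

definition blk :: "nat \<Rightarrow> nat \<Rightarrow> (nat \<Rightarrow> 'a::zero) \<Rightarrow> (nat \<Rightarrow> 'a)" where
  "blk n j x = (\<lambda>i. if i < n then x (j * n + i) else 0)"

text \<open>Phi_Lambda = phi_{lambda_1} (x) ... (x) phi_{lambda_m}, as a function on the basis F_q^{nm}.\<close>
definition Phi :: "nat \<Rightarrow> nat \<Rightarrow> nat \<Rightarrow> nat \<Rightarrow> (nat \<Rightarrow> 'a::{field,finite}) set
    \<Rightarrow> ('b \<Rightarrow> (nat \<Rightarrow> 'a) \<Rightarrow> 'a) \<Rightarrow> (nat \<Rightarrow> 'b) \<Rightarrow> (nat \<Rightarrow> 'a) \<Rightarrow> complex" where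
  "Phi p n k m C \<kappa> \<Lambda> = (\<lambda>x. if x \<in> vecs (n * m)
      then (\<Prod>j<m. phi p k C \<kappa> (\<Lambda> j) (blk n j x)) else 0)"

definition cscale :: "complex \<Rightarrow> ('x \<Rightarrow> complex) \<Rightarrow> ('x \<Rightarrow> complex)" where
  "cscale c v = (\<lambda>x. c * v x)"

definition Qcode :: "nat \<Rightarrow> nat \<Rightarrow> nat \<Rightarrow> nat \<Rightarrow> (nat \<Rightarrow> 'a::{field,finite}) set
    \<Rightarrow> (nat \<Rightarrow> 'b) set \<Rightarrow> ('b \<Rightarrow> (nat \<Rightarrow> 'a) \<Rightarrow> 'a) \<Rightarrow> ((nat \<Rightarrow> 'a) \<Rightarrow> complex) set" where
  "Qcode p n k m C D \<kappa> = module.span cscale (Phi p n k m C \<kappa> ` D)"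

text \<open>The Hilbert space (C^q)^{(x) N}: complex functions on F_q^N.\<close>
definition hilb :: "nat \<Rightarrow> ((nat \<Rightarrow> 'a::zero) \<Rightarrow> complex) set" where
  "hilb N = {v. \<forall>x. x \<notin> vecs N \<longrightarrow> v x = 0}"

definition omega :: "nat \<Rightarrow> complex" where
  "omega p = (if p = 2 then \<i> else cis (2 * pi / real p))"

definition crange :: "nat \<Rightarrow> nat set" where
  "crange p = (if p = 2 then {..<4} else {..<p})"

text \<open>Elements omega^c X(a) Z(b) of P_N, encoded by (c, a, b).\<close>
definition pauli :: "nat \<Rightarrow> nat \<Rightarrow> (nat \<times> (nat \<Rightarrow> 'a::zero) \<times> (nat \<Rightarrow> 'a)) set" where
  "pauli p N = {(c, a, b). c \<in> crange p \<and> a \<in> vecs N \<and> b \<in> vecs N}"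

text \<open>Action: (omega^c X(a) Z(b) v)(y) = omega^c zeta^{sum_j tr(b_j (y_j - a_j))} v(y - a),
  using X(a)|x> = |x+a>, Z(b)|x> = zeta^{sum_j tr(b_j x_j)}|x>.\<close>
definition pauli_op :: "nat \<Rightarrow> nat \<Rightarrow> nat \<Rightarrow> nat \<times> (nat \<Rightarrow> 'a::field) \<times> (nat \<Rightarrow> 'a)
    \<Rightarrow> ((nat \<Rightarrow> 'a) \<Rightarrow> complex) \<Rightarrow> ((nat \<Rightarrow> 'a) \<Rightarrow> complex)" where
  "pauli_op p r N E v = (case E of (c, a, b) \<Rightarrow>
     (\<lambda>y. omega p ^ c * (\<Prod>j<N. zeta_pow p (tr p r (b j * (y j - a j)))) * v (y - a)))"

definition pweight :: "nat \<Rightarrow> nat \<times> (nat \<Rightarrow> 'a::zero) \<times> (nat \<Rightarrow> 'a) \<Rightarrow> nat" where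
  "pweight N E = (case E of (c, a, b) \<Rightarrow> card {j. j < N \<and> (a j \<noteq> 0 \<or> b j \<noteq> 0)})"

definition stab :: "nat \<Rightarrow> nat \<Rightarrow> nat \<Rightarrow> ((nat \<Rightarrow> 'a::field) \<Rightarrow> complex) set
    \<Rightarrow> (nat \<times> (nat \<Rightarrow> 'a) \<times> (nat \<Rightarrow> 'a)) set" where
  "stab p r N Q = {E \<in> pauli p N. \<forall>v\<in>Q. pauli_op p r N E v = v}"

definition centr :: "nat \<Rightarrow> nat \<Rightarrow> nat \<Rightarrow> ((nat \<Rightarrow> 'a::field) \<Rightarrow> complex) set
    \<Rightarrow> (nat \<times> (nat \<Rightarrow> 'a) \<times> (nat \<Rightarrow> 'a)) set" where
  "centr p r N Q = {E \<in> pauli p N. \<forall>S\<in>stab p r N Q. \<forall>v\<in>hilb N.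
      pauli_op p r N E (pauli_op p r N S v) = pauli_op p r N S (pauli_op p r N E v)}"

definition scalars :: "nat \<Rightarrow> nat \<Rightarrow> (nat \<times> (nat \<Rightarrow> 'a::zero) \<times> (nat \<Rightarrow> 'a)) set" where
  "scalars p N = {E \<in> pauli p N. fst (snd E) = 0 \<and> snd (snd E) = 0}"

definition stab_scal :: "nat \<Rightarrow> nat \<Rightarrow> nat \<Rightarrow> ((nat \<Rightarrow> 'a::field) \<Rightarrow> complex) set
    \<Rightarrow> (nat \<times> (nat \<Rightarrow> 'a) \<times> (nat \<Rightarrow> 'a)) set" where
  "stab_scal p r N Q = {E \<in> pauli p N. \<exists>S\<in>stab p r N Q. \<exists>Z\<in>scalars p N. \<forall>v\<in>hilb N.
      pauli_op p r N E v = pauli_op p r N S (pauli_op p r N Z v)}"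

definition stab_min_dist :: "nat \<Rightarrow> nat \<Rightarrow> nat \<Rightarrow> ((nat \<Rightarrow> 'a::field) \<Rightarrow> complex) set \<Rightarrow> nat" where
  "stab_min_dist p r N Q = Min (pweight N ` (centr p r N Q - stab_scal p r N Q))"

end

theory Submission
  imports Defs "HOL-Computational_Algebra.Polynomial" "HOL-Number_Theory.Cong"
begin

(* The stabilizer S of Q contains Z(b) whenever every block of b is trace-orthogonal to C, and
   X(a) whenever a \<in> C^m satisfies psi \<Lambda> a = 1 for all \<Lambda> \<in> D, where psi \<Lambda> is the character
   of C^m along which Phi \<Lambda> varies. Under a nondegenerate bicharacter of finite abelian groups
   every subgroup is its own double annihilator. Applied to the trace form on F_q^n and to psi on
   F_{q^k}^m \<times> C^m, this shows that an error (c, a, b) commuting with S has all blocks of a in C,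
   and that the word of F_{q^k}^m corresponding to b under \<kappa> lies in D. If the error has weight
   below d(C) \<le> d(D), then a and that word vanish, so the error is a scalar times Z(b) \<in> S.
   Conversely X(c), for c \<in> C of minimum weight, commutes with S but is not a scalar multiple of
   an element of S, since Phi \<Lambda> takes different values at 0 and at c when \<kappa> (\<Lambda> 0) c \<noteq> 0. *)

section \<open>Prime fields and the additive character\<close>

lemma of_nat_card_eq_0: "of_nat CARD('a::{field,finite}) = (0::'a)"
proof -
  have "(\<Sum>x\<in>(UNIV::'a set). x + 1) = (\<Sum>x\<in>UNIV. x)"
    by (rule sum.reindex_bij_witness[of _ "\<lambda>x. x - 1" "\<lambda>x. x + 1"]) auto
  then show ?thesis
    by (simp add: sum.distrib)
qed

lemma CHAR_eq_prime_of_card: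
  assumes "prime p" and "CARD('a::{field,finite}) = p ^ r"
  shows "CHAR('a) = p"
proof -
  have "prime CHAR('a)"
    using prime_CHAR_semidom finite_imp_CHAR_pos[where 'a = 'a] by simp
  moreover have "CHAR('a) dvd p ^ r"
    using of_nat_card_eq_0[where 'a = 'a] assms(2) by (metis of_nat_eq_0_iff_char_dvd)
  ultimately show ?thesis
    using assms(1) by (metis prime_dvd_power primes_dvd_imp_eq)
qed

lemma power_card_eq_self: "(x::'a::{field,finite}) ^ CARD('a) = x"
proof (cases "x = 0")
  case False
  let ?U = "UNIV - {0::'a}"
  have "(\<Prod>y\<in>?U. x * y) = (\<Prod>y\<in>?U. y)"
    by (rule prod.reindex_bij_witness[of _ "\<lambda>y. y / x" "\<lambda>y. x * y"]) (use False in auto)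
  then have "x ^ card ?U * \<Prod>?U = 1 * \<Prod>?U"
    by (simp add: prod.distrib)
  then have "x ^ (CARD('a) - 1) = 1"
    by (simp add: card_Diff_singleton)
  then show ?thesis
    by (metis finite_UNIV_card_ge_0 finite power_minus_mult mult_1)
qed simp

lemma sum_in_Nats: "(\<And>i. i \<in> I \<Longrightarrow> f i \<in> \<nat>) \<Longrightarrow> sum f I \<in> \<nat>"
  by (induction I rule: infinite_finite_induct) simp_all

lemma zeta_pow_nonzero [simp]: "zeta_pow p t \<noteq> 0"
  by (simp add: zeta_pow_def)

context
  fixes p :: nat
  assumes CHAR_eq: "CHAR('a::field) = p" and prime_p: "prime p"
begin

lemma of_nat_eq_of_nat_iff_mod: "(of_nat i :: 'a) = of_nat j \<longleftrightarrow> i mod p = j mod p"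
  using of_nat_eq_iff_cong_CHAR[where 'a = 'a] CHAR_eq by (simp add: cong_def)

lemma Fp_eq_Nats: "(Fp p :: 'a set) = \<nat>"
proof -
  have "(of_nat j :: 'a) \<in> Fp p" for j
    using of_nat_eq_of_nat_iff_mod[of j "j mod p"] prime_gt_0_nat[OF prime_p]
    unfolding Fp_def by (intro CollectI exI[of _ "j mod p"]) simp
  then show ?thesis
    unfolding Fp_def Nats_def by auto
qed

lemma fp_nat_of_nat: "fp_nat p (of_nat j :: 'a) = j mod p"
  unfolding fp_nat_def
  by (rule the_equality) (use prime_gt_0_nat[OF prime_p] of_nat_eq_of_nat_iff_mod in auto)

lemma zeta_pow_of_nat: "zeta_pow p (of_nat j :: 'a) = cis (2 * pi * real j / real p)"
proof -
  have "real j = real (j mod p) + real p * real (j div p)"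
    by (metis mod_mult_div_eq of_nat_add of_nat_mult)
  then have "2 * pi * real j / real p = 2 * pi * real (j mod p) / real p + 2 * pi * real (j div p)"
    using prime_gt_0_nat[OF prime_p] by (simp add: field_simps)
  then show ?thesis
    unfolding zeta_pow_def fp_nat_of_nat by (simp add: cis_mult[symmetric])
qed

lemma zeta_pow_zero [simp]: "zeta_pow p (0 :: 'a) = 1"
  using zeta_pow_of_nat[of 0] by simp

lemma zeta_pow_add:
  assumes "s \<in> \<nat>" and "t \<in> \<nat>"
  shows "zeta_pow p (s + t :: 'a) = zeta_pow p s * zeta_pow p t"
proof -
  from assms obtain i j where s: "s = of_nat i" and t: "t = of_nat j"
    by (auto elim!: Nats_cases)
  show ?thesis
    unfolding s t of_nat_add[symmetric] zeta_pow_of_nat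
    by (simp add: cis_mult add_divide_distrib distrib_left)
qed

lemma zeta_pow_sum:
  assumes "\<And>i. i \<in> I \<Longrightarrow> (f i :: 'a) \<in> \<nat>"
  shows "zeta_pow p (sum f I) = (\<Prod>i\<in>I. zeta_pow p (f i))"
  using assms
  by (induction I rule: infinite_finite_induct) (simp_all add: zeta_pow_add sum_in_Nats)

lemma zeta_pow_eq_1_iff:
  assumes "t \<in> \<nat>"
  shows "zeta_pow p (t :: 'a) = 1 \<longleftrightarrow> t = 0"
proof
  assume zeta_1: "zeta_pow p t = 1"
  from assms obtain j where t: "t = of_nat j"
    by (auto elim!: Nats_cases)
  define x where "x = 2 * pi * real (j mod p) / real p"
  have "cos x = 1"
    using zeta_1 unfolding t zeta_pow_def fp_nat_of_nat x_def by (metis cis.sel(1) one_complex.sel(1))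
  moreover have "0 \<le> x" and "x < 2 * pi"
    using prime_gt_0_nat[OF prime_p] unfolding x_def by (auto simp: field_simps)
  ultimately have "x = 0"
    by (metis cos_le_one cos_mono_le_eq cos_one_sin_zero linorder_not_le nless_le pi_ge_zero sin_lt_zero)
  then have "j mod p = 0"
    using prime_gt_0_nat[OF prime_p] unfolding x_def by simp
  then show "t = 0"
    using of_nat_eq_of_nat_iff_mod[of j 0] unfolding t by simp
qed simp

end

section \<open>Character sums and annihilators\<close>

definition add_submonoid :: "'a::monoid_add set \<Rightarrow> bool" where
  "add_submonoid A \<longleftrightarrow> 0 \<in> A \<and> (\<forall>x\<in>A. \<forall>y\<in>A. x + y \<in> A)"

definition annihilator :: "('v \<Rightarrow> 'w \<Rightarrow> complex) \<Rightarrow> 'w set \<Rightarrow> 'v set \<Rightarrow> 'w set" where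
  "annihilator e W A = {y \<in> W. \<forall>a\<in>A. e a y = 1}"

lemma character_sum:
  fixes \<theta> :: "'v::cancel_comm_monoid_add \<Rightarrow> complex"
  assumes "finite B" and "add_submonoid B"
    and \<theta>_add: "\<And>x y. x \<in> B \<Longrightarrow> y \<in> B \<Longrightarrow> \<theta> (x + y) = \<theta> x * \<theta> y"
  shows "(\<Sum>x\<in>B. \<theta> x) = (if \<forall>x\<in>B. \<theta> x = 1 then of_nat (card B) else 0)"
proof (cases "\<forall>x\<in>B. \<theta> x = 1")
  case False
  then obtain x\<^sub>0 where x\<^sub>0: "x\<^sub>0 \<in> B" "\<theta> x\<^sub>0 \<noteq> 1"
    by blast
  have "(\<lambda>x. x + x\<^sub>0) ` B \<subseteq> B" and "inj_on (\<lambda>x. x + x\<^sub>0) B"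
    using \<open>add_submonoid B\<close> x\<^sub>0 by (auto simp: add_submonoid_def inj_on_def)
  then have "bij_betw (\<lambda>x. x + x\<^sub>0) B B"
    using \<open>finite B\<close> by (simp add: bij_betw_def card_image card_subset_eq)
  then have "(\<Sum>x\<in>B. \<theta> x) = (\<Sum>x\<in>B. \<theta> (x + x\<^sub>0))"
    using sum.reindex_bij_betw[of _ B B \<theta>] by simp
  also have "\<dots> = (\<Sum>x\<in>B. \<theta> x) * \<theta> x\<^sub>0"
    using x\<^sub>0 by (simp add: \<theta>_add sum_distrib_right)
  finally show ?thesis
    using x\<^sub>0 False by (auto simp: algebra_simps)
qed simp

locale bicharacter =
  fixes V :: "'v::ab_group_add set" and W :: "'w::ab_group_add set"
    and e :: "'v \<Rightarrow> 'w \<Rightarrow> complex"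
  assumes finite_V: "finite V" and finite_W: "finite W"
    and add_submonoid_V: "add_submonoid V" and add_submonoid_W: "add_submonoid W"
    and mult_left: "\<And>x x' y. x \<in> V \<Longrightarrow> x' \<in> V \<Longrightarrow> y \<in> W \<Longrightarrow> e (x + x') y = e x y * e x' y"
    and mult_right: "\<And>x y y'. x \<in> V \<Longrightarrow> y \<in> W \<Longrightarrow> y' \<in> W \<Longrightarrow> e x (y + y') = e x y * e x y'"
    and nonzero: "\<And>x y. x \<in> V \<Longrightarrow> y \<in> W \<Longrightarrow> e x y \<noteq> 0"
    and nondegenerate_left: "\<And>x. x \<in> V \<Longrightarrow> \<forall>y\<in>W. e x y = 1 \<Longrightarrow> x = 0"
    and nondegenerate_right: "\<And>y. y \<in> W \<Longrightarrow> \<forall>x\<in>V. e x y = 1 \<Longrightarrow> y = 0"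
begin

lemma zero_left: "y \<in> W \<Longrightarrow> e 0 y = 1"
  using mult_left[of 0 0 y] nonzero[of 0 y] add_submonoid_V by (simp add: add_submonoid_def)

lemma swap: "bicharacter W V (\<lambda>y x. e x y)"
  by unfold_locales
    (simp_all add: finite_V finite_W add_submonoid_V add_submonoid_W mult_left mult_right
      nonzero nondegenerate_left nondegenerate_right)

lemma card_mult_card_annihilator:
  assumes "A \<subseteq> V" and "add_submonoid A"
  shows "card A * card (annihilator e W A) = card W"
proof -
  have "finite A"
    using assms(1) finite_V finite_subset by blast
  have "0 \<in> A"
    using assms(2) by (simp add: add_submonoid_def)
  have row: "(\<Sum>y\<in>W. e a y) = (if a = 0 then of_nat (card W) else 0)" if "a \<in> A" for a
  proof -
    have "(\<forall>y\<in>W. e a y = 1) \<longleftrightarrow> a = 0"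
      using that assms(1) nondegenerate_left zero_left by blast
    then show ?thesis
      using that assms(1) by (subst character_sum) (auto simp: finite_W add_submonoid_W mult_right)
  qed
  have column: "(\<Sum>a\<in>A. e a y) = (if y \<in> annihilator e W A then of_nat (card A) else 0)"
    if "y \<in> W" for y
    using that assms \<open>finite A\<close>
    by (subst character_sum) (auto simp: annihilator_def mult_left subset_eq)
  have "(of_nat (card W) :: complex) = (\<Sum>a\<in>A. \<Sum>y\<in>W. e a y)"
    using \<open>finite A\<close> \<open>0 \<in> A\<close> by (simp add: row)
  also have "\<dots> = (\<Sum>y\<in>W. \<Sum>a\<in>A. e a y)"
    by (rule sum.swap)
  also have "\<dots> = (\<Sum>y\<in>annihilator e W A. of_nat (card A))"
    using finite_W by (simp add: column sum.If_cases annihilator_def Int_def)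
  finally show ?thesis
    by (simp flip: of_nat_mult)
qed

lemma annihilator_annihilator:
  assumes "A \<subseteq> V" and "add_submonoid A"
  shows "annihilator (\<lambda>y x. e x y) V (annihilator e W A) = A"
proof -
  interpret dual: bicharacter W V "\<lambda>y x. e x y"
    by (rule swap)
  let ?A' = "annihilator e W A" and ?A'' = "annihilator (\<lambda>y x. e x y) V (annihilator e W A)"
  have "0 \<in> ?A'"
    using assms(1) add_submonoid_W dual.zero_left by (auto simp: annihilator_def add_submonoid_def)
  have "?A' \<subseteq> W" and "add_submonoid ?A'"
    using \<open>0 \<in> ?A'\<close> assms(1) add_submonoid_W
    by (auto simp: annihilator_def add_submonoid_def mult_right subset_eq)
  then have "card ?A' * card ?A'' = card V"
    by (rule dual.card_mult_card_annihilator)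
  moreover have "card A * card ?A' = card W"
    using assms by (rule card_mult_card_annihilator)
  moreover have "annihilator e W V = {0}"
    using add_submonoid_W dual.zero_left nondegenerate_right
    by (auto simp: annihilator_def add_submonoid_def)
  then have "card V = card W"
    using card_mult_card_annihilator[OF subset_refl add_submonoid_V] by simp
  moreover have "card ?A' \<noteq> 0"
    using \<open>0 \<in> ?A'\<close> finite_W by (auto simp: annihilator_def)
  ultimately have "card ?A'' = card A"
    by (metis mult.commute mult_left_cancel)
  moreover have "A \<subseteq> ?A''"
    using assms(1) by (auto simp: annihilator_def)
  moreover have "finite ?A''"
    using finite_V by (simp add: annihilator_def)
  ultimately show ?thesis
    by (metis card_subset_eq)
qed

end

section \<open>Vectors, blocks and weights\<close>

lemma finite_vecs: "finite (vecs n :: (nat \<Rightarrow> 'a::{zero,finite}) set)"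
proof -
  have "vecs n = {f. \<forall>x. (x \<in> {..<n} \<longrightarrow> f x \<in> (UNIV :: 'a set)) \<and> (x \<notin> {..<n} \<longrightarrow> f x = 0)}"
    by (auto simp: vecs_def)
  then show ?thesis
    using finite_set_of_finite_funs[of "{..<n}" "UNIV :: 'a set" 0] by simp
qed

lemma zero_in_vecs [simp]: "0 \<in> vecs n"
  by (simp add: vecs_def)

lemma add_submonoid_vecs: "add_submonoid (vecs n :: (nat \<Rightarrow> 'a::monoid_add) set)"
  by (simp add: add_submonoid_def vecs_def)

lemma vecs_add: "x \<in> vecs n \<Longrightarrow> y \<in> vecs n \<Longrightarrow> (x :: nat \<Rightarrow> 'a::monoid_add) + y \<in> vecs n"
  by (simp add: vecs_def)

lemma vecs_diff: "x \<in> vecs n \<Longrightarrow> y \<in> vecs n \<Longrightarrow> (x :: nat \<Rightarrow> 'a::ab_group_add) - y \<in> vecs n"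
  by (simp add: vecs_def)

lemma nonzero_index_less: "x \<in> vecs n \<Longrightarrow> x i \<noteq> 0 \<Longrightarrow> i < n"
  unfolding vecs_def using leI by blast

definition dot :: "nat \<Rightarrow> (nat \<Rightarrow> 'a::comm_semiring_0) \<Rightarrow> (nat \<Rightarrow> 'a) \<Rightarrow> 'a" where
  "dot N x y = (\<Sum>i<N. x i * y i)"

lemma dot_commute: "dot N x y = dot N y x"
  by (simp add: dot_def mult.commute)

lemma dot_add_left: "dot N (x + x') y = dot N x y + dot N x' y"
  by (simp add: dot_def distrib_right sum.distrib)

lemma dot_add_right: "dot N x (y + y') = dot N x y + dot N x y'"
  by (simp add: dot_def distrib_left sum.distrib)

lemma dot_zero_left [simp]: "dot N 0 y = 0"
  by (simp add: dot_def)

lemma dot_zero_right [simp]: "dot N x 0 = 0"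
  by (simp add: dot_def)

lemma dot_delta_right:
  assumes "i < N"
  shows "dot N x (\<lambda>j. if j = i then u else 0) = x i * u"
proof -
  have "dot N x (\<lambda>j. if j = i then u else 0) = (\<Sum>j<N. if j = i then x i * u else 0)"
    unfolding dot_def by (rule sum.cong) simp_all
  then show ?thesis
    using assms by simp
qed

lemma blk_in_vecs: "blk n j x \<in> vecs n"
  by (simp add: vecs_def blk_def)

lemma blk_add: "blk n j (x + y) = blk n j x + blk n j (y :: nat \<Rightarrow> 'a::monoid_add)"
  by (auto simp: blk_def fun_eq_iff)

lemma blk_diff: "blk n j (x - y) = blk n j x - blk n j (y :: nat \<Rightarrow> 'a::ab_group_add)"
  by (auto simp: blk_def fun_eq_iff)

lemma blk_zero [simp]: "blk n j 0 = 0"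
  by (auto simp: blk_def fun_eq_iff)

lemma block_index_eq:
  fixes n t t' j j' :: nat
  assumes "t < n" and "t' < n" and "j * n + t = j' * n + t'"
  shows "j = j'"
proof -
  have "(j * n + t) div n = j" and "(j' * n + t') div n = j'"
    using assms(1,2) by simp_all
  then show ?thesis
    using assms(3) by metis
qed

lemma block_end_le: "j < m \<Longrightarrow> j * n + n \<le> n * (m::nat)"
  by (metis Suc_leI add.commute mult.commute mult_Suc_right mult_le_mono2)

definition place :: "nat \<Rightarrow> nat \<Rightarrow> (nat \<Rightarrow> 'a::zero) \<Rightarrow> nat \<Rightarrow> 'a" where
  "place n j c = (\<lambda>i. if j * n \<le> i \<and> i < j * n + n then c (i - j * n) else 0)"

lemma place_0: "c \<in> vecs n \<Longrightarrow> place n 0 c = c"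
  by (auto simp: place_def vecs_def fun_eq_iff)

lemma place_in_vecs: "j < m \<Longrightarrow> place n j c \<in> vecs (n * m)"
  using block_end_le[of j m n] by (simp add: vecs_def place_def)

lemma blk_place:
  assumes "c \<in> vecs n"
  shows "blk n j' (place n j c) = (if j' = j then c else 0)"
proof
  fix t
  show "blk n j' (place n j c) t = (if j' = j then c else 0) t"
  proof (cases "t < n")
    case True
    have "j * n \<le> j' * n + t \<and> j' * n + t < j * n + n \<longleftrightarrow> j' = j"
    proof
      assume "j * n \<le> j' * n + t \<and> j' * n + t < j * n + n"
      then show "j' = j"
        using block_index_eq[of "j' * n + t - j * n" n t j j'] True by auto
    qed (use True in simp)
    then show ?thesis
      using True by (auto simp: blk_def place_def)
  next
    case False
    then show ?thesis
      using assms by (simp add: blk_def vecs_def)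
  qed
qed

lemma vecs_eq_0_if_blocks_eq_0:
  assumes "x \<in> vecs (n * m)" and "\<And>j. j < m \<Longrightarrow> blk n j x = 0"
  shows "x = 0"
proof
  fix i
  show "x i = 0 i"
  proof (cases "i < n * m")
    case True
    then have "0 < n" and "i div n < m"
      by (auto simp: less_mult_imp_div_less mult.commute intro: Nat.gr0I)
    then have "x i = blk n (i div n) x (i mod n)"
      by (simp add: blk_def mult.commute)
    then show ?thesis
      using assms(2)[OF \<open>i div n < m\<close>] by simp
  qed (use assms(1) in \<open>simp add: vecs_def\<close>)
qed

lemma sum_blocks: "(\<Sum>i<n * m. f i :: 'a::comm_monoid_add) = (\<Sum>j<m. \<Sum>t<n. f (j * n + t))"
  for n m :: nat
proof -
  have "(\<Sum>i<n * m. f i) = (\<Sum>j<m. sum f {j * n..<j * n + n})"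
    using sum.nat_group[where g = f and k = n and n = m] by (simp add: mult.commute)
  also have "\<dots> = (\<Sum>j<m. \<Sum>t<n. f (j * n + t))"
  proof (rule sum.cong)
    fix j
    show "sum f {j * n..<j * n + n} = (\<Sum>t<n. f (j * n + t))"
      using sum.shift_bounds_nat_ivl[where m = 0, of f "j * n" n] by (simp add: add.commute atLeast0LessThan)
  qed simp
  finally show ?thesis .
qed

lemma dot_blocks: "dot (n * m) x y = (\<Sum>j<m. dot n (blk n j x) (blk n j y))"
  unfolding dot_def sum_blocks by (intro sum.cong refl) (simp add: blk_def)

lemma dot_place:
  assumes "c \<in> vecs n" and "j < m"
  shows "dot (n * m) (place n j c) x = dot n c (blk n j x)"
proof -
  have "dot (n * m) (place n j c) x = (\<Sum>j'<m. if j' = j then dot n c (blk n j x) else 0)"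
    unfolding dot_blocks blk_place[OF assms(1)] by (rule sum.cong) simp_all
  then show ?thesis
    using assms(2) by simp
qed

definition weight :: "nat \<Rightarrow> (nat \<Rightarrow> 'a::zero) \<Rightarrow> nat" where
  "weight N x = card {i. i < N \<and> x i \<noteq> 0}"

lemma weight_vecs: "x \<in> vecs n \<Longrightarrow> n \<le> N \<Longrightarrow> weight N x = weight n x"
proof -
  assume "x \<in> vecs n" and "n \<le> N"
  then have "{i. i < N \<and> x i \<noteq> 0} = {i. i < n \<and> x i \<noteq> 0}"
    by (force dest: nonzero_index_less[OF \<open>x \<in> vecs n\<close>])
  then show ?thesis
    by (simp add: weight_def)
qed

lemma weight_blk_le:
  assumes "j < m"
  shows "weight n (blk n j x) \<le> weight (n * m) x"
proof -
  have "(\<lambda>t. j * n + t) ` {t. t < n \<and> blk n j x t \<noteq> 0} \<subseteq> {i. i < n * m \<and> x i \<noteq> 0}"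
    using block_end_le[OF assms, of n] by (auto simp: blk_def)
  then show ?thesis
    unfolding weight_def by (rule card_inj_on_le[rotated]) (simp_all add: inj_on_def)
qed

lemma card_nonzero_blocks_le_weight:
  "card {j. j < m \<and> blk n j x \<noteq> 0} \<le> weight (n * m) x"
proof -
  have "{j. j < m \<and> blk n j x \<noteq> 0} \<subseteq> (\<lambda>i. i div n) ` {i. i < n * m \<and> x i \<noteq> 0}"
  proof
    fix j assume "j \<in> {j. j < m \<and> blk n j x \<noteq> 0}"
    then obtain t where "j < m" and "t < n" and "x (j * n + t) \<noteq> 0"
      by (auto simp: blk_def fun_eq_iff split: if_splits)
    moreover from this have "j * n + t < n * m"
      using block_end_le[of j m n] by linarith
    ultimately show "j \<in> (\<lambda>i. i div n) ` {i. i < n * m \<and> x i \<noteq> 0}"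
      by (intro image_eqI[of _ _ "j * n + t"]) auto
  qed
  moreover have "finite {i. i < n * m \<and> x i \<noteq> 0}"
    by simp
  ultimately show ?thesis
    unfolding weight_def by (meson card_image_le card_mono finite_imageI order_trans)
qed

lemma card_Collect_less_le: "card {i. i < N \<and> P i} \<le> N"
  using card_mono[of "{..<N}" "{i. i < N \<and> P i}"] by auto

lemma weight_le_pweight:
  shows "weight N a \<le> pweight N (c, a, b)" and "weight N b \<le> pweight N (c, a, b)"
  unfolding weight_def pweight_def by (auto intro: card_mono)

lemma pweight_X: "pweight N (c, a, 0) = weight N a"
  by (simp add: pweight_def weight_def)

lemma pweight_le: "pweight N E \<le> N"
  unfolding pweight_def by (simp add: card_Collect_less_le split: prod.split)

lemma finite_hdists: "finite {hdist n x y | x y. x \<in> C \<and> y \<in> C \<and> x \<noteq> y}"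
  by (rule finite_subset[of _ "{..n}"]) (auto simp: hdist_def card_Collect_less_le)

lemma min_dist_le_weight:
  assumes "0 \<in> C" and "c \<in> C" and "c \<noteq> 0"
  shows "min_dist n C \<le> weight n c"
proof -
  have "weight n c = hdist n c 0"
    by (simp add: hdist_def weight_def)
  then have "weight n c \<in> {hdist n x y | x y. x \<in> C \<and> y \<in> C \<and> x \<noteq> y}"
    using assms by blast
  then show ?thesis
    unfolding min_dist_def using finite_hdists by (rule Min_le[rotated])
qed

lemma min_dist_attained:
  fixes C :: "(nat \<Rightarrow> 'a::ab_group_add) set"
  assumes "\<And>x y. x \<in> C \<Longrightarrow> y \<in> C \<Longrightarrow> x - y \<in> C" and "c \<in> C" and "c \<noteq> 0"
  shows "\<exists>c\<^sub>0\<in>C. c\<^sub>0 \<noteq> 0 \<and> weight n c\<^sub>0 = min_dist n C"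
proof -
  have "0 \<in> C"
    using assms(1)[OF assms(2) assms(2)] by simp
  then have "{hdist n x y | x y. x \<in> C \<and> y \<in> C \<and> x \<noteq> y} \<noteq> {}"
    using assms(2,3) by blast
  then have "min_dist n C \<in> {hdist n x y | x y. x \<in> C \<and> y \<in> C \<and> x \<noteq> y}"
    unfolding min_dist_def using finite_hdists by (rule Min_in[rotated])
  then obtain x y where "x \<in> C" "y \<in> C" "x \<noteq> y" and "min_dist n C = hdist n x y"
    by blast
  moreover have "hdist n x y = weight n (x - y)"
    by (simp add: hdist_def weight_def)
  ultimately show ?thesis
    using assms(1) by (intro bexI[of _ "x - y"]) auto
qed

section \<open>The trace form and Pauli operators\<close>

definition tr_char :: "nat \<Rightarrow> nat \<Rightarrow> nat \<Rightarrow> (nat \<Rightarrow> 'a::field) \<Rightarrow> (nat \<Rightarrow> 'a) \<Rightarrow> complex" where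
  "tr_char p r N x y = zeta_pow p (tr p r (dot N x y))"

lemma tr_char_nonzero [simp]: "tr_char p r N x y \<noteq> 0"
  by (simp add: tr_char_def)

lemma tr_char_commute: "tr_char p r N x y = tr_char p r N y x"
  by (simp add: tr_char_def dot_commute)

lemma omega_nonzero [simp]: "omega p \<noteq> 0"
  by (simp add: omega_def)

lemma module_cscale: "module (cscale :: complex \<Rightarrow> ('x \<Rightarrow> complex) \<Rightarrow> _)"
  by unfold_locales (auto simp: cscale_def algebra_simps)

lemma pauli_op_cscale_add:
  "pauli_op p r N E (cscale k v + w) = cscale k (pauli_op p r N E v) + pauli_op p r N E w"
  by (auto simp: pauli_op_def cscale_def algebra_simps split: prod.split)

lemma pauli_op_fixes_span:
  assumes "v \<in> module.span cscale G" and "\<And>g. g \<in> G \<Longrightarrow> pauli_op p r N E g = g"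
  shows "pauli_op p r N E v = v"
proof -
  have "pauli_op p r N E 0 = 0"
    by (auto simp: pauli_op_def split: prod.split)
  then show ?thesis
    using module.span_induct_alt[OF module_cscale assms(1), of "\<lambda>v. pauli_op p r N E v = v"]
    by (simp add: pauli_op_cscale_add assms(2))
qed

lemma pauli_op_mult_const: "pauli_op p r N E (\<lambda>y. k * v y) = (\<lambda>y. k * pauli_op p r N E v y)"
  by (auto simp: pauli_op_def algebra_simps split: prod.split)

lemma zero_X_Z_in_pauli: "p \<noteq> 0 \<Longrightarrow> a \<in> vecs N \<Longrightarrow> b \<in> vecs N \<Longrightarrow> (0, a, b) \<in> pauli p N"
  by (simp add: pauli_def crange_def)

context
  fixes p r :: nat
  assumes prime_p: "prime p" and card_eq: "CARD('a::{field,finite}) = p ^ r"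
begin

lemma CHAR_eq: "CHAR('a) = p"
  by (rule CHAR_eq_prime_of_card[OF prime_p card_eq])

lemma frobenius_add: "((x::'a) + y) ^ p ^ i = x ^ p ^ i + y ^ p ^ i"
  by (rule freshmans_dream') (simp_all add: CHAR_eq prime_p)

lemma Nats_power_p_power: "(t::'a) \<in> \<nat> \<Longrightarrow> t ^ p ^ i = t"
proof (induction rule: Nats_induct)
  case (of_nat j)
  show ?case
    by (induction j) (simp_all add: frobenius_add prime_gt_0_nat[OF prime_p])
qed

lemma Nats_iff_power_p_eq: "(y::'a) \<in> \<nat> \<longleftrightarrow> y ^ p = y"
proof
  assume "y ^ p = y"
  define P :: "'a poly" where "P = monom 1 p - [:0, 1:]"
  have p_gt_1: "p > 1"
    using prime_gt_1_nat[OF prime_p] .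
  then have "coeff P p = 1"
    unfolding P_def by (simp add: coeff_pCons split: nat.split)
  then have "P \<noteq> 0"
    by auto
  have "degree P \<le> p"
    unfolding P_def by (rule degree_diff_le) (use p_gt_1 in \<open>auto intro: degree_monom_le\<close>)
  have poly_P: "poly P x = x ^ p - x" for x
    unfolding P_def by (simp add: poly_monom)
  have "inj_on (of_nat :: nat \<Rightarrow> 'a) {..<p}"
    by (rule inj_onI) (simp add: of_nat_eq_of_nat_iff_mod[OF CHAR_eq prime_p])
  then have "card (of_nat ` {..<p} :: 'a set) = p"
    by (simp add: card_image)
  moreover have "of_nat ` {..<p} \<subseteq> {x::'a. poly P x = 0}"
    using Nats_power_p_power[of _ 1] by (auto simp: poly_P)
  moreover have "card {x::'a. poly P x = 0} \<le> p"
    using card_poly_roots_bound[OF \<open>P \<noteq> 0\<close>] \<open>degree P \<le> p\<close> by linarith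
  ultimately have "of_nat ` {..<p} = {x::'a. poly P x = 0}"
    using poly_roots_finite[OF \<open>P \<noteq> 0\<close>] by (intro card_seteq) auto
  moreover have "poly P y = 0"
    using \<open>y ^ p = y\<close> by (simp add: poly_P)
  ultimately show "y \<in> \<nat>"
    by (auto simp: Nats_def)
qed (use Nats_power_p_power[of y 1] in simp)

lemma tr_add: "tr p r ((x::'a) + y) = tr p r x + tr p r y"
  unfolding tr_def by (simp add: frobenius_add sum.distrib)

lemma tr_zero [simp]: "tr p r (0::'a) = 0"
  unfolding tr_def using prime_gt_0_nat[OF prime_p] by (simp add: zero_power)

lemma tr_sum: "tr p r (sum (f :: 'c \<Rightarrow> 'a) I) = (\<Sum>i\<in>I. tr p r (f i))"
  by (induction I rule: infinite_finite_induct) (simp_all add: tr_add)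

lemma tr_mult_Nats: "(t::'a) \<in> \<nat> \<Longrightarrow> tr p r (t * x) = t * tr p r x"
  unfolding tr_def by (simp add: power_mult_distrib Nats_power_p_power sum_distrib_left)

lemma tr_in_Nats: "tr p r (x::'a) \<in> \<nat>"
proof -
  have "x ^ p ^ r = x"
    using power_card_eq_self[of x] card_eq by simp
  have "tr p r x ^ p = (\<Sum>i<r. x ^ p ^ Suc i)"
    unfolding tr_def freshmans_dream_sum[OF prime_p[folded CHAR_eq] CHAR_eq[symmetric]]
    by (simp add: power_mult[symmetric] mult.commute)
  also have "\<dots> = tr p r x"
    unfolding tr_def using \<open>x ^ p ^ r = x\<close> sum.lessThan_Suc_shift[of "\<lambda>i. x ^ p ^ i" r]
    by simp
  finally show ?thesis
    using Nats_iff_power_p_eq by blast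
qed

lemma tr_not_identically_zero: "\<exists>x::'a. tr p r x \<noteq> 0"
proof (rule ccontr)
  assume "\<nexists>x::'a. tr p r x \<noteq> 0"
  then have tr_0: "tr p r (x::'a) = 0" for x
    by simp
  have p_gt_1: "p > 1"
    using prime_gt_1_nat[OF prime_p] .
  have "card {0::'a, 1} \<le> CARD('a)"
    by (rule card_mono) simp_all
  then have "r \<noteq> 0"
    using card_eq by (cases r) auto
  define P :: "'a poly" where "P = (\<Sum>i<r. monom 1 (p ^ i))"
  have "coeff P (p ^ (r - 1)) = (\<Sum>i<r. if i = r - 1 then 1 else 0)"
    unfolding P_def coeff_sum coeff_monom using p_gt_1 by (intro sum.cong) auto
  also have "\<dots> = 1"
    using \<open>r \<noteq> 0\<close> by simp
  finally have "P \<noteq> 0"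
    by auto
  have "degree P \<le> p ^ (r - 1)"
    unfolding P_def
  proof (rule degree_sum_le)
    fix i assume "i \<in> {..<r}"
    then have "p ^ i \<le> p ^ (r - 1)"
      using p_gt_1 by (intro power_increasing) auto
    then show "degree (monom (1::'a) (p ^ i)) \<le> p ^ (r - 1)"
      using degree_monom_le order.trans by blast
  qed simp
  have "{x::'a. poly P x = 0} = UNIV"
    using tr_0 unfolding P_def tr_def by (simp add: poly_sum poly_monom)
  then have "p ^ r \<le> p ^ (r - 1)"
    using card_poly_roots_bound[OF \<open>P \<noteq> 0\<close>] \<open>degree P \<le> p ^ (r - 1)\<close> card_eq by simp
  then show False
    using p_gt_1 \<open>r \<noteq> 0\<close> by simp
qed

lemma zeta_pow_tr_add: "zeta_pow p (tr p r ((x::'a) + y)) = zeta_pow p (tr p r x) * zeta_pow p (tr p r y)"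
  by (simp add: tr_add zeta_pow_add[OF CHAR_eq prime_p]
      tr_in_Nats)

lemma tr_char_add_left: "tr_char p r N (x + x') y = tr_char p r N x y * tr_char p r N (x' :: nat \<Rightarrow> 'a) y"
  by (simp add: tr_char_def dot_add_left zeta_pow_tr_add)

lemma tr_char_add_right: "tr_char p r N x (y + y') = tr_char p r N x y * tr_char p r N (x :: nat \<Rightarrow> 'a) y'"
  by (simp add: tr_char_def dot_add_right zeta_pow_tr_add)

lemma tr_char_zero_left [simp]: "tr_char p r N 0 (y :: nat \<Rightarrow> 'a) = 1"
  and tr_char_zero_right [simp]: "tr_char p r N (x :: nat \<Rightarrow> 'a) 0 = 1"
  by (simp_all add: tr_char_def tr_zero zeta_pow_zero[OF CHAR_eq prime_p])

lemma tr_char_eq_1_iff: "tr_char p r N x y = 1 \<longleftrightarrow> tr p r (dot N x (y :: nat \<Rightarrow> 'a)) = 0"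
  unfolding tr_char_def
  by (rule zeta_pow_eq_1_iff[OF CHAR_eq prime_p tr_in_Nats])

lemma prod_zeta_pow_tr: "(\<Prod>j<N. zeta_pow p (tr p r (b j * z j))) = tr_char p r N b (z :: nat \<Rightarrow> 'a)"
  unfolding tr_char_def dot_def tr_sum
  by (rule zeta_pow_sum[OF CHAR_eq prime_p, symmetric])
    (rule tr_in_Nats)

lemma tr_char_blocks:
  "tr_char p r (n * m) x y = (\<Prod>j<m. tr_char p r n (blk n j x) (blk n j (y :: nat \<Rightarrow> 'a)))"
  unfolding tr_char_def dot_blocks tr_sum
  by (rule zeta_pow_sum[OF CHAR_eq prime_p]) (rule tr_in_Nats)

lemma tr_char_place:
  "c \<in> vecs n \<Longrightarrow> j < m \<Longrightarrow> tr_char p r (n * m) (place n j c) x = tr_char p r n c (blk n j (x :: nat \<Rightarrow> 'a))"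
  by (simp add: tr_char_def dot_place)

lemma tr_dot_nondegenerate:
  assumes "x \<in> vecs N" and "x \<noteq> 0"
  shows "\<exists>y\<in>vecs N. tr p r (dot N x (y :: nat \<Rightarrow> 'a)) \<noteq> 0"
proof -
  obtain i where "x i \<noteq> 0"
    using assms(2) by (auto simp: fun_eq_iff)
  have "i < N"
    using assms(1) \<open>x i \<noteq> 0\<close> by (rule nonzero_index_less)
  obtain t :: 'a where "tr p r t \<noteq> 0"
    using tr_not_identically_zero by blast
  define y where "y = (\<lambda>j. if j = i then t / x i else 0)"
  have "y \<in> vecs N"
    using \<open>i < N\<close> by (simp add: y_def vecs_def)
  moreover have "dot N x y = t"
    unfolding y_def dot_delta_right[OF \<open>i < N\<close>] using \<open>x i \<noteq> 0\<close> by simp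
  ultimately show ?thesis
    using \<open>tr p r t \<noteq> 0\<close> by auto
qed

lemma bicharacter_tr_char: "bicharacter (vecs N) (vecs N) (tr_char p r N :: (nat \<Rightarrow> 'a) \<Rightarrow> _)"
proof
  fix x :: "nat \<Rightarrow> 'a"
  assume "x \<in> vecs N" and "\<forall>y\<in>vecs N. tr_char p r N x y = 1"
  then show "x = 0"
    using tr_dot_nondegenerate by (auto simp: tr_char_eq_1_iff)
next
  fix y :: "nat \<Rightarrow> 'a"
  assume "y \<in> vecs N" and "\<forall>x\<in>vecs N. tr_char p r N x y = 1"
  then show "y = 0"
    using tr_dot_nondegenerate[of y N] by (auto simp: tr_char_eq_1_iff dot_commute)
qed (simp_all add: finite_vecs add_submonoid_vecs tr_char_add_left tr_char_add_right)

lemma pauli_op_eq: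
  "pauli_op p r N (c, a, b) v = (\<lambda>y. omega p ^ c * tr_char p r N b (y - a) * v (y - (a :: nat \<Rightarrow> 'a)))"
  unfolding pauli_op_def by (simp add: prod_zeta_pow_tr[symmetric])

lemma pauli_op_scalar: "pauli_op p r N (c, 0, 0) v = (\<lambda>y. omega p ^ c * v (y :: nat \<Rightarrow> 'a))"
  by (simp add: pauli_op_eq)

lemma tr_char_eq_if_centr_stab:
  assumes "(c, a, b) \<in> centr p r N Q" and "(c', a', b') \<in> stab p r N Q"
  shows "tr_char p r N b a' = tr_char p r N b' (a :: nat \<Rightarrow> 'a)"
proof -
  define \<delta> :: "(nat \<Rightarrow> 'a) \<Rightarrow> complex" where "\<delta> = (\<lambda>x. if x = 0 then 1 else 0)"
  have "\<delta> \<in> hilb N"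
    by (simp add: \<delta>_def hilb_def)
  then have "pauli_op p r N (c, a, b) (pauli_op p r N (c', a', b') \<delta>) (a + a')
      = pauli_op p r N (c', a', b') (pauli_op p r N (c, a, b) \<delta>) (a + a')"
    using assms unfolding centr_def by auto
  then have "omega p ^ c * tr_char p r N b a' * omega p ^ c'
      = omega p ^ c' * tr_char p r N b' a * omega p ^ c"
    by (simp add: pauli_op_eq \<delta>_def)
  then show ?thesis
    by simp
qed

lemma X_commutes:
  assumes "tr_char p r N b' a = 1"
  shows "pauli_op p r N (0, a, 0) (pauli_op p r N (c', a', b') v)
    = pauli_op p r N (c', a', b') (pauli_op p r N (0, a, 0) (v :: (nat \<Rightarrow> 'a) \<Rightarrow> complex))"
proof
  fix y :: "nat \<Rightarrow> 'a"
  have "tr_char p r N b' (y - a') = tr_char p r N b' (y - a - a') * tr_char p r N b' a"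
    using tr_char_add_right[of N b' "y - a - a'" a] by (simp add: algebra_simps)
  then show "pauli_op p r N (0, a, 0) (pauli_op p r N (c', a', b') v) y
    = pauli_op p r N (c', a', b') (pauli_op p r N (0, a, 0) v) y"
    using assms by (simp add: pauli_op_eq algebra_simps)
qed

lemma Z_scalar_in_stab_scal:
  assumes "(0, 0, b) \<in> stab p r N Q" and "c \<in> crange p"
  shows "(c, 0, b :: nat \<Rightarrow> 'a) \<in> stab_scal p r N Q"
proof -
  have "(c, 0, b) \<in> pauli p N" and "(c, 0, 0) \<in> scalars p N"
    using assms by (auto simp: stab_def pauli_def scalars_def)
  moreover have "pauli_op p r N (c, 0, b) v = pauli_op p r N (0, 0, b) (pauli_op p r N (c, 0, 0) v)" for v
    by (simp add: pauli_op_eq algebra_simps)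
  ultimately show ?thesis
    using assms(1) unfolding stab_scal_def by blast
qed

end

section \<open>The code Q\<close>

lemma module_fscale: "module (fscale :: 'a::field \<Rightarrow> (nat \<Rightarrow> 'a) \<Rightarrow> _)"
  by unfold_locales (auto simp: fscale_def algebra_simps)

lemma vector_space_fscale: "vector_space (fscale :: 'a::field \<Rightarrow> (nat \<Rightarrow> 'a) \<Rightarrow> _)"
  by unfold_locales (auto simp: fscale_def algebra_simps)

lemma dim_fscale_zero: "vector_space.dim fscale {0 :: nat \<Rightarrow> 'a::field} = 0"
  using vector_space.dim_span_eq_card_independent[OF vector_space_fscale
      module.independent_empty[OF module_fscale]]
  by (simp add: module.span_empty[OF module_fscale])

lemma linear_code_nonzero: "linear_code n k C \<Longrightarrow> 1 \<le> k \<Longrightarrow> C \<noteq> {0 :: nat \<Rightarrow> 'a::field}"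
  using dim_fscale_zero[where 'a = 'a] by (auto simp: linear_code_def)

lemma subspace_fscale_iff:
  "module.subspace fscale (S :: (nat \<Rightarrow> 'a::field) set) \<longleftrightarrow>
    0 \<in> S \<and> (\<forall>x\<in>S. \<forall>y\<in>S. x + y \<in> S) \<and> (\<forall>c. \<forall>x\<in>S. fscale c x \<in> S)"
  unfolding module.subspace_def[OF module_fscale] ..

locale code_construction =
  fixes p r n k m :: nat
    and C :: "(nat \<Rightarrow> 'a::{field,finite}) set"
    and D :: "(nat \<Rightarrow> 'b::{field,finite}) set"
    and \<kappa> :: "'b \<Rightarrow> (nat \<Rightarrow> 'a) \<Rightarrow> 'a"
  assumes prime_p: "prime p" and card_eq: "CARD('a) = p ^ r"
    and C_vecs: "C \<subseteq> vecs n" and C_subspace: "module.subspace fscale C"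
    and D_vecs: "D \<subseteq> vecs m" and D_subspace: "module.subspace fscale D"
    and m_pos: "0 < m"
    and \<kappa>_bij: "bij_betw \<kappa> UNIV (lin_fun p C)"
    and \<kappa>_add: "\<forall>l u. \<kappa> (l + u) = (\<lambda>c. \<kappa> l c + \<kappa> u c)"
begin

abbreviation Q :: "((nat \<Rightarrow> 'a) \<Rightarrow> complex) set" where
  "Q \<equiv> Qcode p n k m C D \<kappa>"

definition Cm :: "(nat \<Rightarrow> 'a) set" where
  "Cm = {x \<in> vecs (n * m). \<forall>j<m. blk n j x \<in> C}"

definition psi :: "(nat \<Rightarrow> 'b) \<Rightarrow> (nat \<Rightarrow> 'a) \<Rightarrow> complex" where
  "psi \<Lambda> x = (\<Prod>j<m. zeta_pow p (\<kappa> (\<Lambda> j) (blk n j x)))"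

definition tr_functional :: "(nat \<Rightarrow> 'a) \<Rightarrow> (nat \<Rightarrow> 'a) \<Rightarrow> 'a" where
  "tr_functional \<beta> = (\<lambda>x. if x \<in> C then tr p r (dot n \<beta> x) else 0)"

lemma CHAR_eq_p: "CHAR('a) = p"
  by (rule CHAR_eq[OF prime_p card_eq])

lemma zero_in_C: "0 \<in> C"
  and add_in_C: "x \<in> C \<Longrightarrow> y \<in> C \<Longrightarrow> x + y \<in> C"
  and fscale_in_C: "x \<in> C \<Longrightarrow> fscale a x \<in> C"
  using C_subspace by (simp_all add: subspace_fscale_iff)

lemma diff_in_C: "x \<in> C \<Longrightarrow> y \<in> C \<Longrightarrow> x - y \<in> C"
proof -
  assume "x \<in> C" and "y \<in> C"
  moreover have "fscale (-1) y = - y"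
    by (simp add: fscale_def fun_eq_iff)
  ultimately show "x - y \<in> C"
    using add_in_C[of x "fscale (-1) y"] fscale_in_C[of y "-1"] by simp
qed

lemma zero_in_D: "0 \<in> D"
  and fscale_in_D: "\<Lambda> \<in> D \<Longrightarrow> fscale l \<Lambda> \<in> D"
  using D_subspace by (simp_all add: subspace_fscale_iff)

lemma add_submonoid_C: "add_submonoid C"
  and add_submonoid_D: "add_submonoid D"
  using C_subspace D_subspace by (simp_all add: subspace_fscale_iff add_submonoid_def)

lemma lin_fun_in_Nats: "f \<in> lin_fun p C \<Longrightarrow> c \<in> C \<Longrightarrow> f c \<in> \<nat>"
  and lin_fun_add: "f \<in> lin_fun p C \<Longrightarrow> c \<in> C \<Longrightarrow> c' \<in> C \<Longrightarrow> f (c + c') = f c + f c'"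
  and lin_fun_outside: "f \<in> lin_fun p C \<Longrightarrow> c \<notin> C \<Longrightarrow> f c = 0"
  by (simp_all add: lin_fun_def Fp_eq_Nats[OF CHAR_eq_p prime_p])

lemma \<kappa>_in_lin_fun: "\<kappa> l \<in> lin_fun p C"
  using \<kappa>_bij by (auto simp: bij_betw_def)

lemma \<kappa>_in_Nats: "c \<in> C \<Longrightarrow> \<kappa> l c \<in> \<nat>"
  using lin_fun_in_Nats[OF \<kappa>_in_lin_fun] .

lemma \<kappa>_inj: "\<kappa> l = \<kappa> l' \<Longrightarrow> l = l'"
  using \<kappa>_bij by (auto simp: bij_betw_def inj_on_def)

lemma \<kappa>_inv_into: "f \<in> lin_fun p C \<Longrightarrow> \<kappa> (inv_into UNIV \<kappa> f) = f"
  using \<kappa>_bij by (simp add: bij_betw_inv_into_right)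

lemma \<kappa>_zero: "\<kappa> 0 = (\<lambda>c. 0)"
proof
  fix c
  have "\<kappa> 0 c = \<kappa> 0 c + \<kappa> 0 c"
    using fun_cong[OF \<kappa>_add[rule_format, of 0 0], of c] by simp
  then show "\<kappa> 0 c = 0"
    by (metis add_cancel_left_right)
qed

lemma \<kappa>_at_zero [simp]: "\<kappa> l 0 = 0"
  using lin_fun_add[OF \<kappa>_in_lin_fun zero_in_C zero_in_C, of l] by (metis add_cancel_left_right)

lemma dot_fscale_right: "dot n \<beta> (fscale a c) = a * dot n \<beta> c"
  by (simp add: dot_def fscale_def sum_distrib_left mult_ac)

lemma tr_functional_in_lin_fun: "tr_functional \<beta> \<in> lin_fun p C"
  unfolding lin_fun_def Fp_eq_Nats[OF CHAR_eq_p prime_p] tr_functional_def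
  by (auto simp: add_in_C fscale_in_C dot_add_right dot_fscale_right tr_in_Nats[OF prime_p card_eq]
      tr_add[OF prime_p card_eq] tr_mult_Nats[OF prime_p card_eq])

lemma tr_functional_zero: "tr_functional 0 = (\<lambda>c. 0)"
  unfolding tr_functional_def dot_zero_left tr_zero[OF prime_p card_eq] by simp

lemma \<kappa>_inv_tr_functional: "\<kappa> (inv_into UNIV \<kappa> (tr_functional \<beta>)) = tr_functional \<beta>"
  by (rule \<kappa>_inv_into[OF tr_functional_in_lin_fun])

lemma finite_Cm: "finite Cm"
  using finite_vecs by (rule finite_subset[rotated]) (auto simp: Cm_def)

lemma add_submonoid_Cm: "add_submonoid Cm"
  using zero_in_C by (auto simp: add_submonoid_def Cm_def vecs_add blk_add add_in_C)

lemma diff_in_Cm: "x \<in> Cm \<Longrightarrow> y \<in> Cm \<Longrightarrow> x - y \<in> Cm"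
  by (auto simp: Cm_def vecs_diff blk_diff diff_in_C)

lemma diff_in_Cm_iff: "a \<in> Cm \<Longrightarrow> y - a \<in> Cm \<longleftrightarrow> y \<in> Cm"
  using add_submonoid_Cm diff_in_Cm by (fastforce simp: add_submonoid_def)

lemma place_in_Cm: "c \<in> C \<Longrightarrow> j < m \<Longrightarrow> place n j c \<in> Cm"
  using C_vecs zero_in_C by (auto simp: Cm_def place_in_vecs blk_place)

lemma C_subset_Cm: "C \<subseteq> Cm"
  using place_in_Cm[OF _ m_pos] place_0 C_vecs by (metis subsetD subsetI)

lemma psi_nonzero [simp]: "psi \<Lambda> x \<noteq> 0"
  by (simp add: psi_def)

lemma psi_zero_left [simp]: "psi 0 x = 1"
  by (simp add: psi_def \<kappa>_zero zeta_pow_zero[OF CHAR_eq_p prime_p])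

lemma psi_add_left: "x \<in> Cm \<Longrightarrow> psi (\<Lambda> + \<Lambda>') x = psi \<Lambda> x * psi \<Lambda>' x"
  by (simp add: psi_def Cm_def \<kappa>_add zeta_pow_add[OF CHAR_eq_p prime_p] \<kappa>_in_Nats prod.distrib)

lemma psi_add_right: "x \<in> Cm \<Longrightarrow> y \<in> Cm \<Longrightarrow> psi \<Lambda> (x + y) = psi \<Lambda> x * psi \<Lambda> y"
  by (simp add: psi_def Cm_def blk_add lin_fun_add[OF \<kappa>_in_lin_fun] zeta_pow_add[OF CHAR_eq_p prime_p]
      \<kappa>_in_Nats prod.distrib)

lemma psi_place: "c \<in> C \<Longrightarrow> j\<^sub>0 < m \<Longrightarrow> psi \<Lambda> (place n j\<^sub>0 c) = zeta_pow p (\<kappa> (\<Lambda> j\<^sub>0) c)"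
  using C_vecs by (auto simp: psi_def blk_place zeta_pow_zero[OF CHAR_eq_p prime_p] if_distrib cong: if_cong)

lemma psi_delta_left:
  "j\<^sub>0 < m \<Longrightarrow> psi (\<lambda>j. if j = j\<^sub>0 then l else 0) x = zeta_pow p (\<kappa> l (blk n j\<^sub>0 x))"
proof -
  assume "j\<^sub>0 < m"
  have "psi (\<lambda>j. if j = j\<^sub>0 then l else 0) x
      = (\<Prod>j<m. if j = j\<^sub>0 then zeta_pow p (\<kappa> l (blk n j\<^sub>0 x)) else 1)"
    unfolding psi_def by (rule prod.cong) (simp_all add: \<kappa>_zero zeta_pow_zero[OF CHAR_eq_p prime_p])
  then show ?thesis
    using \<open>j\<^sub>0 < m\<close> by simp
qed

lemma psi_zero_right [simp]: "psi \<Lambda> 0 = 1"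
  by (simp add: psi_def zeta_pow_zero[OF CHAR_eq_p prime_p])

lemma psi_of_C: "c \<in> C \<Longrightarrow> psi \<Lambda> c = zeta_pow p (\<kappa> (\<Lambda> 0) c)"
  using psi_place[OF _ m_pos] place_0 C_vecs by (metis subsetD)

lemma psi_nondegenerate_left:
  assumes "\<Lambda> \<in> vecs m" and "\<forall>x\<in>Cm. psi \<Lambda> x = 1"
  shows "\<Lambda> = 0"
proof
  fix j
  show "\<Lambda> j = 0 j"
  proof (cases "j < m")
    case True
    have "\<kappa> (\<Lambda> j) c = 0" for c
    proof (cases "c \<in> C")
      case True
      then have "zeta_pow p (\<kappa> (\<Lambda> j) c) = 1"
        using assms(2) place_in_Cm psi_place \<open>j < m\<close> by metis
      then show ?thesis
        using zeta_pow_eq_1_iff[OF CHAR_eq_p prime_p \<kappa>_in_Nats[OF True]] by simp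
    qed (simp add: lin_fun_outside[OF \<kappa>_in_lin_fun])
    then have "\<kappa> (\<Lambda> j) = \<kappa> 0"
      by (simp add: \<kappa>_zero fun_eq_iff)
    then show ?thesis
      using \<kappa>_inj by simp
  qed (use assms(1) in \<open>simp add: vecs_def\<close>)
qed

lemma \<kappa>_separates:
  assumes "c \<in> C" and "c \<noteq> 0"
  shows "\<exists>l. \<kappa> l c \<noteq> 0"
proof -
  obtain \<beta> where "tr p r (dot n c \<beta>) \<noteq> 0"
    using tr_dot_nondegenerate[OF prime_p card_eq _ assms(2)] assms(1) C_vecs by blast
  then have "\<kappa> (inv_into UNIV \<kappa> (tr_functional \<beta>)) c \<noteq> 0"
    using assms(1) unfolding \<kappa>_inv_tr_functional by (simp add: tr_functional_def dot_commute)
  then show ?thesis ..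
qed

lemma psi_nondegenerate_right:
  assumes "x \<in> Cm" and "\<forall>\<Lambda>\<in>vecs m. psi \<Lambda> x = 1"
  shows "x = 0"
proof (rule vecs_eq_0_if_blocks_eq_0)
  show "x \<in> vecs (n * m)"
    using assms(1) by (simp add: Cm_def)
next
  fix j
  assume "j < m"
  then have "blk n j x \<in> C"
    using assms(1) by (simp add: Cm_def)
  show "blk n j x = 0"
  proof (rule ccontr)
    assume "blk n j x \<noteq> 0"
    then obtain l where "\<kappa> l (blk n j x) \<noteq> 0"
      using \<kappa>_separates[OF \<open>blk n j x \<in> C\<close>] by blast
    then have "psi (\<lambda>i. if i = j then l else 0) x \<noteq> 1"
      using \<open>blk n j x \<in> C\<close> \<open>j < m\<close>
      by (simp add: psi_delta_left zeta_pow_eq_1_iff[OF CHAR_eq_p prime_p] \<kappa>_in_Nats)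
    moreover have "(\<lambda>i. if i = j then l else 0) \<in> vecs m"
      using \<open>j < m\<close> by (simp add: vecs_def)
    ultimately show False
      using assms(2) by blast
  qed
qed

lemma bicharacter_psi: "bicharacter (vecs m) Cm psi"
  by unfold_locales
    (simp_all add: finite_vecs finite_Cm add_submonoid_vecs add_submonoid_Cm psi_add_left
      psi_add_right psi_nondegenerate_left psi_nondegenerate_right)

lemma Phi_eq:
  obtains K where "K \<noteq> 0"
    and "\<And>\<Lambda> y. Phi p n k m C \<kappa> \<Lambda> y = (if y \<in> Cm then K * psi \<Lambda> y else 0)"
proof
  let ?K = "complex_of_real (real CARD('a) powr (- real k / 2))"
  show "?K ^ m \<noteq> 0"
    by simp
  fix \<Lambda> y
  show "Phi p n k m C \<kappa> \<Lambda> y = (if y \<in> Cm then ?K ^ m * psi \<Lambda> y else 0)"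
  proof (cases "y \<in> Cm")
    case True
    then have "Phi p n k m C \<kappa> \<Lambda> y = (\<Prod>j<m. ?K * zeta_pow p (\<kappa> (\<Lambda> j) (blk n j y)))"
      unfolding Phi_def phi_def Cm_def by (auto intro: prod.cong)
    then show ?thesis
      using True by (simp add: psi_def prod.distrib)
  next
    case False
    then have "y \<notin> vecs (n * m) \<or> (\<exists>j<m. blk n j y \<notin> C)"
      by (auto simp: Cm_def)
    then show ?thesis
      using False by (auto simp: Phi_def phi_def)
  qed
qed

lemma Phi_in_Q: "\<Lambda> \<in> D \<Longrightarrow> Phi p n k m C \<kappa> \<Lambda> \<in> Q"
  unfolding Qcode_def by (rule module.span_base[OF module_cscale]) simp

lemma Phi_in_hilb: "Phi p n k m C \<kappa> \<Lambda> \<in> hilb (n * m)"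
  by (simp add: hilb_def Phi_def)

lemma stabI:
  assumes "E \<in> pauli p (n * m)"
    and "\<And>\<Lambda>. \<Lambda> \<in> D \<Longrightarrow> pauli_op p r (n * m) E (Phi p n k m C \<kappa> \<Lambda>) = Phi p n k m C \<kappa> \<Lambda>"
  shows "E \<in> stab p r (n * m) Q"
  using assms pauli_op_fixes_span unfolding stab_def Qcode_def by blast

lemma Z_in_stab:
  assumes "b \<in> vecs (n * m)" and "\<And>j. j < m \<Longrightarrow> blk n j b \<in> annihilator (tr_char p r n) (vecs n) C"
  shows "(0, 0, b) \<in> stab p r (n * m) Q"
proof (rule stabI)
  show "(0, 0, b) \<in> pauli p (n * m)"
    using assms(1) prime_p by (simp add: zero_X_Z_in_pauli prime_gt_0_nat)
  have b_char: "tr_char p r (n * m) b y = 1" if "y \<in> Cm" for y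
    unfolding tr_char_blocks[OF prime_p card_eq]
  proof (intro prod.neutral ballI)
    fix j
    assume "j \<in> {..<m}"
    then have "blk n j y \<in> C" and "blk n j b \<in> annihilator (tr_char p r n) (vecs n) C"
      using that assms(2) by (auto simp: Cm_def)
    then show "tr_char p r n (blk n j b) (blk n j y) = 1"
      by (subst tr_char_commute) (simp add: annihilator_def)
  qed
  obtain K where "K \<noteq> 0" and K: "\<And>\<Lambda> y. Phi p n k m C \<kappa> \<Lambda> y = (if y \<in> Cm then K * psi \<Lambda> y else 0)"
    by (rule Phi_eq) (rule that)
  show "pauli_op p r (n * m) (0, 0, b) (Phi p n k m C \<kappa> \<Lambda>) = Phi p n k m C \<kappa> \<Lambda>" for \<Lambda>
  proof
    fix y
    show "pauli_op p r (n * m) (0, 0, b) (Phi p n k m C \<kappa> \<Lambda>) y = Phi p n k m C \<kappa> \<Lambda> y"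
      by (cases "y \<in> Cm") (simp_all add: pauli_op_eq[OF prime_p card_eq] K b_char)
  qed
qed

lemma X_in_stab:
  assumes "a \<in> annihilator psi Cm D"
  shows "(0, a, 0) \<in> stab p r (n * m) Q"
proof (rule stabI)
  have "a \<in> Cm" and a_ann: "\<And>\<Lambda>. \<Lambda> \<in> D \<Longrightarrow> psi \<Lambda> a = 1"
    using assms by (auto simp: annihilator_def)
  then show "(0, a, 0) \<in> pauli p (n * m)"
    using prime_p by (simp add: zero_X_Z_in_pauli prime_gt_0_nat Cm_def)
  obtain K where "K \<noteq> 0" and K: "\<And>\<Lambda> y. Phi p n k m C \<kappa> \<Lambda> y = (if y \<in> Cm then K * psi \<Lambda> y else 0)"
    by (rule Phi_eq) (rule that)
  show "pauli_op p r (n * m) (0, a, 0) (Phi p n k m C \<kappa> \<Lambda>) = Phi p n k m C \<kappa> \<Lambda>"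
    if "\<Lambda> \<in> D" for \<Lambda>
  proof
    fix y
    have "psi \<Lambda> (y - a) = psi \<Lambda> y" if "y \<in> Cm"
      using psi_add_right[OF diff_in_Cm[OF that \<open>a \<in> Cm\<close>] \<open>a \<in> Cm\<close>, of \<Lambda>] a_ann[OF \<open>\<Lambda> \<in> D\<close>]
      by simp
    then show "pauli_op p r (n * m) (0, a, 0) (Phi p n k m C \<kappa> \<Lambda>) y = Phi p n k m C \<kappa> \<Lambda> y"
      using diff_in_Cm_iff[OF \<open>a \<in> Cm\<close>, of y]
      by (simp add: pauli_op_eq[OF prime_p card_eq] tr_char_zero_left[OF prime_p card_eq] K)
  qed
qed

lemma tr_char_eq_1_if_stab:
  assumes "(c', a', b') \<in> stab p r (n * m) Q" and "c \<in> C"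
  shows "tr_char p r (n * m) b' c = 1"
proof -
  obtain K where "K \<noteq> 0"
    and K: "\<And>\<Lambda> y. Phi p n k m C \<kappa> \<Lambda> y = (if y \<in> Cm then K * psi \<Lambda> y else 0)"
    by (rule Phi_eq) (rule that)
  let ?\<Phi> = "Phi p n k m C \<kappa> 0"
  have fixed: "pauli_op p r (n * m) (c', a', b') ?\<Phi> = ?\<Phi>"
    using assms(1) Phi_in_Q[OF zero_in_D] by (simp add: stab_def)
  have "c \<in> Cm"
    using assms(2) C_subset_Cm by blast
  have "?\<Phi> a' = omega p ^ c' * K"
    using fun_cong[OF fixed, of a'] add_submonoid_Cm
    by (simp add: pauli_op_eq[OF prime_p card_eq] tr_char_zero_right[OF prime_p card_eq] K add_submonoid_def)
  moreover have "?\<Phi> (a' + c) = omega p ^ c' * tr_char p r (n * m) b' c * K"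
    using fun_cong[OF fixed, of "a' + c"] \<open>c \<in> Cm\<close> by (simp add: pauli_op_eq[OF prime_p card_eq] K)
  moreover have "?\<Phi> (a' + c) = ?\<Phi> a'"
    using diff_in_Cm_iff[OF \<open>c \<in> Cm\<close>, of "a' + c"] by (simp add: K)
  ultimately show ?thesis
    using \<open>K \<noteq> 0\<close> by simp
qed

lemma X_in_centr:
  assumes "c \<in> C"
  shows "(0, c, 0) \<in> centr p r (n * m) Q"
proof -
  have "(0, c, 0) \<in> pauli p (n * m)"
    using assms C_subset_Cm prime_p by (auto simp: zero_X_Z_in_pauli prime_gt_0_nat Cm_def)
  then show ?thesis
    unfolding centr_def
    using X_commutes[OF prime_p card_eq tr_char_eq_1_if_stab[OF _ assms]] by auto
qed

lemma X_notin_stab_scal: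
  assumes "\<Lambda>\<^sub>1 \<in> D" and "\<Lambda>\<^sub>1 0 = 1" and "c \<in> C" and "c \<noteq> 0"
  shows "(0, c, 0) \<notin> stab_scal p r (n * m) Q"
proof
  assume "(0, c, 0) \<in> stab_scal p r (n * m) Q"
  then obtain S c'' where S: "S \<in> stab p r (n * m) Q"
    and decomp: "\<And>v. v \<in> hilb (n * m) \<Longrightarrow>
      pauli_op p r (n * m) (0, c, 0) v = pauli_op p r (n * m) S (pauli_op p r (n * m) (c'', 0, 0) v)"
    unfolding stab_scal_def scalars_def by force
  obtain K where "K \<noteq> 0"
    and K: "\<And>\<Lambda> y. Phi p n k m C \<kappa> \<Lambda> y = (if y \<in> Cm then K * psi \<Lambda> y else 0)"
    by (rule Phi_eq) (rule that)
  have "c \<in> Cm"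
    using assms(3) C_subset_Cm by blast
  have key: "K = omega p ^ c'' * K * zeta_pow p (\<kappa> (\<Lambda> 0) c)" if "\<Lambda> \<in> D" for \<Lambda>
  proof -
    have "pauli_op p r (n * m) (0, c, 0) (Phi p n k m C \<kappa> \<Lambda>)
        = (\<lambda>y. omega p ^ c'' * Phi p n k m C \<kappa> \<Lambda> y)"
      using decomp[OF Phi_in_hilb] S Phi_in_Q[OF that]
      by (simp add: pauli_op_scalar[OF prime_p card_eq] pauli_op_mult_const stab_def)
    from fun_cong[OF this, of c] show ?thesis
      using \<open>c \<in> Cm\<close> add_submonoid_Cm assms(3)
      by (simp add: pauli_op_eq[OF prime_p card_eq] tr_char_zero_left[OF prime_p card_eq] K psi_of_C
          add_submonoid_def)
  qed
  have "omega p ^ c'' = 1"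
    using key[OF zero_in_D] \<open>K \<noteq> 0\<close> by (simp add: \<kappa>_zero zeta_pow_zero[OF CHAR_eq_p prime_p])
  obtain l where "\<kappa> l c \<noteq> 0"
    using \<kappa>_separates[OF assms(3,4)] by blast
  moreover have "fscale l \<Lambda>\<^sub>1 \<in> D" and "fscale l \<Lambda>\<^sub>1 0 = l"
    using fscale_in_D[OF assms(1)] assms(2) by (simp_all add: fscale_def)
  then have "zeta_pow p (\<kappa> l c) = 1"
    using key[of "fscale l \<Lambda>\<^sub>1"] \<open>omega p ^ c'' = 1\<close> \<open>K \<noteq> 0\<close> by simp
  ultimately show False
    using zeta_pow_eq_1_iff[OF CHAR_eq_p prime_p \<kappa>_in_Nats[OF assms(3)]] by simp
qed

lemma centr_X_blocks_in_C:
  assumes "(c, a, b) \<in> centr p r (n * m) Q" and "j < m"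
  shows "blk n j a \<in> C"
proof -
  interpret bicharacter "vecs n" "vecs n" "tr_char p r n :: (nat \<Rightarrow> 'a) \<Rightarrow> _"
    by (rule bicharacter_tr_char[OF prime_p card_eq])
  have "tr_char p r n (blk n j a) y = 1" if "y \<in> annihilator (tr_char p r n) (vecs n) C" for y
  proof -
    have "0 \<in> annihilator (tr_char p r n) (vecs n) C"
      by (simp add: annihilator_def tr_char_zero_right[OF prime_p card_eq])
    then have "(0, 0, place n j y) \<in> stab p r (n * m) Q"
      using that \<open>j < m\<close> by (intro Z_in_stab) (simp_all add: place_in_vecs blk_place annihilator_def)
    then have "tr_char p r (n * m) b 0 = tr_char p r (n * m) (place n j y) a"
      by (rule tr_char_eq_if_centr_stab[OF prime_p card_eq assms(1)])
    then show ?thesis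
      using that \<open>j < m\<close>
      by (simp add: tr_char_zero_right[OF prime_p card_eq] tr_char_place[OF prime_p card_eq]
          annihilator_def tr_char_commute[of p r n "blk n j a"])
  qed
  then have "blk n j a \<in> annihilator (\<lambda>y x. tr_char p r n x y) (vecs n) (annihilator (tr_char p r n) (vecs n) C)"
    by (simp add: annihilator_def blk_in_vecs)
  then show ?thesis
    using annihilator_annihilator[OF C_vecs add_submonoid_C] by simp
qed

(* Pulls the Z-part of an error back to a word over the field of D, where the duality for psi
   applies (psi_dual_word). *)
definition dual_word :: "(nat \<Rightarrow> 'a) \<Rightarrow> nat \<Rightarrow> 'b" where
  "dual_word b = (\<lambda>j. if j < m then inv_into UNIV \<kappa> (tr_functional (blk n j b)) else 0)"

lemma \<kappa>_dual_word: "j < m \<Longrightarrow> \<kappa> (dual_word b j) = tr_functional (blk n j b)"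
  by (simp add: dual_word_def \<kappa>_inv_tr_functional)

lemma dual_word_in_vecs: "dual_word b \<in> vecs m"
  by (simp add: dual_word_def vecs_def)

lemma psi_dual_word: "y \<in> Cm \<Longrightarrow> psi (dual_word b) y = tr_char p r (n * m) b y"
  unfolding psi_def tr_char_blocks[OF prime_p card_eq]
  by (rule prod.cong) (auto simp: \<kappa>_dual_word tr_functional_def tr_char_def Cm_def)

lemma weight_dual_word_le: "weight m (dual_word b) \<le> card {j. j < m \<and> blk n j b \<noteq> 0}"
proof -
  have "dual_word b j = 0" if "j < m" and "blk n j b = 0" for j
  proof -
    have "\<kappa> (dual_word b j) = \<kappa> 0"
      using that by (simp add: \<kappa>_dual_word \<kappa>_zero tr_functional_zero)
    then show ?thesis
      by (rule \<kappa>_inj)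
  qed
  then show ?thesis
    unfolding weight_def by (intro card_mono) auto
qed

lemma blocks_in_annihilator_if_dual_word_eq_0:
  assumes "dual_word b = 0" and "j < m"
  shows "blk n j b \<in> annihilator (tr_char p r n) (vecs n) C"
proof -
  have "tr_functional (blk n j b) = \<kappa> 0"
    using \<kappa>_dual_word[OF assms(2), of b] assms(1) by simp
  then have "tr p r (dot n (blk n j b) x) = 0" if "x \<in> C" for x
    using fun_cong[of _ _ x] that by (fastforce simp: tr_functional_def \<kappa>_zero)
  then show ?thesis
    by (auto simp: annihilator_def blk_in_vecs tr_char_eq_1_iff[OF prime_p card_eq] dot_commute)
qed

lemma centr_dual_word_in_D:
  assumes "(c, 0, b) \<in> centr p r (n * m) Q"
  shows "dual_word b \<in> D"
proof -
  interpret bicharacter "vecs m" Cm psi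
    by (rule bicharacter_psi)
  have "psi (dual_word b) y = 1" if "y \<in> annihilator psi Cm D" for y
  proof -
    have "tr_char p r (n * m) b y = tr_char p r (n * m) 0 (0 :: nat \<Rightarrow> 'a)"
      using tr_char_eq_if_centr_stab[OF prime_p card_eq assms X_in_stab[OF that]] .
    then show ?thesis
      using that by (simp add: psi_dual_word annihilator_def tr_char_zero_left[OF prime_p card_eq])
  qed
  then have "dual_word b \<in> annihilator (\<lambda>y x. psi x y) (vecs m) (annihilator psi Cm D)"
    by (simp add: annihilator_def dual_word_in_vecs)
  then show ?thesis
    using annihilator_annihilator[OF D_vecs add_submonoid_D] by simp
qed

lemma centr_X_part_eq_0:
  assumes "(c, a, b) \<in> centr p r (n * m) Q" and "weight (n * m) a < min_dist n C"
  shows "a = 0"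
proof (rule vecs_eq_0_if_blocks_eq_0)
  show "a \<in> vecs (n * m)"
    using assms(1) by (simp add: centr_def pauli_def)
next
  fix j
  assume "j < m"
  show "blk n j a = 0"
  proof (rule ccontr)
    assume "blk n j a \<noteq> 0"
    then have "min_dist n C \<le> weight n (blk n j a)"
      using min_dist_le_weight[OF zero_in_C centr_X_blocks_in_C[OF assms(1) \<open>j < m\<close>]] by blast
    also have "\<dots> \<le> weight (n * m) a"
      using \<open>j < m\<close> by (rule weight_blk_le)
    finally show False
      using assms(2) by simp
  qed
qed

lemma centr_dual_word_eq_0:
  assumes "(c, 0, b) \<in> centr p r (n * m) Q" and "weight (n * m) b < min_dist m D"
  shows "dual_word b = 0"
proof (rule ccontr)
  assume "dual_word b \<noteq> 0"
  then have "min_dist m D \<le> weight m (dual_word b)"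
    using min_dist_le_weight[OF zero_in_D centr_dual_word_in_D[OF assms(1)]] by blast
  also have "\<dots> \<le> weight (n * m) b"
    using weight_dual_word_le card_nonzero_blocks_le_weight by (rule order_trans)
  finally show False
    using assms(2) by simp
qed

lemma min_dist_le_pweight:
  assumes "min_dist n C \<le> min_dist m D"
    and "E \<in> centr p r (n * m) Q - stab_scal p r (n * m) Q"
  shows "min_dist n C \<le> pweight (n * m) E"
proof (rule ccontr)
  assume "\<not> min_dist n C \<le> pweight (n * m) E"
  obtain c a b where E: "E = (c, a, b)"
    by (cases E) auto
  with assms(2) have centr: "(c, a, b) \<in> centr p r (n * m) Q"
    and not_stab_scal: "(c, a, b) \<notin> stab_scal p r (n * m) Q"
    and "c \<in> crange p" and "b \<in> vecs (n * m)"
    by (auto simp: centr_def pauli_def)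
  have "weight (n * m) a < min_dist n C" and "weight (n * m) b < min_dist m D"
    using \<open>\<not> min_dist n C \<le> pweight (n * m) E\<close> assms(1) weight_le_pweight[of "n * m" _ c]
    unfolding E by (meson le_less_trans less_le_trans not_le)+
  then have "a = 0"
    using centr_X_part_eq_0[OF centr] by blast
  then have "dual_word b = 0"
    using centr \<open>weight (n * m) b < min_dist m D\<close> by (simp add: centr_dual_word_eq_0)
  then have "(0, 0, b) \<in> stab p r (n * m) Q"
    using \<open>b \<in> vecs (n * m)\<close> blocks_in_annihilator_if_dual_word_eq_0 by (intro Z_in_stab)
  then show False
    using Z_scalar_in_stab_scal[OF prime_p card_eq _ \<open>c \<in> crange p\<close>] not_stab_scal \<open>a = 0\<close> by blast
qed

lemma min_dist_attained_by_centr: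
  assumes "C \<noteq> {0}" and "\<Lambda>\<^sub>1 \<in> D" and "\<Lambda>\<^sub>1 0 = 1"
  shows "\<exists>E \<in> centr p r (n * m) Q - stab_scal p r (n * m) Q. pweight (n * m) E = min_dist n C"
proof -
  obtain c where "c \<in> C" and "c \<noteq> 0"
    using assms(1) zero_in_C by blast
  then obtain c\<^sub>0 where "c\<^sub>0 \<in> C" and "c\<^sub>0 \<noteq> 0" and "weight n c\<^sub>0 = min_dist n C"
    using min_dist_attained[OF diff_in_C] by blast
  moreover have "pweight (n * m) (0, c\<^sub>0, 0) = weight n c\<^sub>0"
    using \<open>c\<^sub>0 \<in> C\<close> C_vecs m_pos by (simp add: pweight_X weight_vecs subset_iff)
  ultimately show ?thesis
    using X_in_centr X_notin_stab_scal[OF assms(2,3)] by (intro bexI[of _ "(0, c\<^sub>0, 0)"]) auto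
qed

end

theorem corollary3p4:
  fixes p r n k m s :: nat
    and C :: "(nat \<Rightarrow> 'a::{field,finite}) set"
    and D :: "(nat \<Rightarrow> 'b::{field,finite}) set"
    and \<kappa> :: "'b \<Rightarrow> (nat \<Rightarrow> 'a) \<Rightarrow> 'a"
  assumes "prime p"
    and "CARD('a) = p ^ r"
    and "CARD('b) = CARD('a) ^ k"
    and "1 \<le> k" and "k < n"
    and "1 \<le> s" and "s < m"
    and "linear_code n k C"
    and "linear_code m s D"
    and "\<forall>i<m. \<exists>\<Lambda>\<in>D. \<Lambda> i = 1"
    and "bij_betw \<kappa> UNIV (lin_fun p C)"
    and "\<forall>l u. \<kappa> (l + u) = (\<lambda>c. \<kappa> l c + \<kappa> u c)"
    and "\<forall>j<p. \<forall>l. \<kappa> (of_nat j * l) = (\<lambda>c. of_nat j * \<kappa> l c)"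
    and "min_dist n C \<le> min_dist m D"
  shows "stab_min_dist p r (n * m) (Qcode p n k m C D \<kappa>) = min_dist n C"
proof -
  interpret code_construction p r n k m C D \<kappa>
    using assms by unfold_locales (auto simp: linear_code_def)
  have "C \<noteq> {0}"
    using assms(8,4) by (rule linear_code_nonzero)
  obtain \<Lambda>\<^sub>1 where "\<Lambda>\<^sub>1 \<in> D" and "\<Lambda>\<^sub>1 0 = 1"
    using assms(7,10) by auto
  let ?W = "pweight (n * m) ` (centr p r (n * m) Q - stab_scal p r (n * m) Q)"
  have "finite ?W"
    by (rule finite_subset[of _ "{..n * m}"]) (auto simp: pweight_le)
  moreover have "min_dist n C \<in> ?W"
    using min_dist_attained_by_centr[OF \<open>C \<noteq> {0}\<close> \<open>\<Lambda>\<^sub>1 \<in> D\<close> \<open>\<Lambda>\<^sub>1 0 = 1\<close>] by force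
  moreover have "min_dist n C \<le> w" if "w \<in> ?W" for w
    using that min_dist_le_pweight[OF assms(14)] by blast
  ultimately show ?thesis
    unfolding stab_min_dist_def by (intro Min_eqI)
qed

end
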